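(* Let $n$ be a positive odd integer and let $x\in\mathbb{Z}$ with $\gcd(x(1-x),n)=1$. Then $$(-1)^{|\{1\le k<n/2:\ \{kx\}_n>k\}|}=\left(\frac{2x(1-x)}{n}\right),$$ $$(-1)^{|\{1\le k<n/2:\ \{kx\}_n>n/2\ \&\ \{k(1-x)\}_n>n/2\}|}=\left(\frac{2}{n}\right),$$ $$(-1)^{|\{1\le k<n/2:\ \{kx\}_n<n/2\ \&\ \{k(1-x)\}_n<n/2\}|}=\left(\frac{2x(x-1)}{n}\right),$$ and $$(-1)^{|\{1\le k<n/2:\ \{kx\}_n>n/2>\{k(1-x)\}_n\}|}=\left(\frac{2x}{n}\right).$$
   Context: For a positive integer $n$ and an integer $y$, $\{y\}_n$ denotes the unique integer $r\in\{0,1,\dots,n-1\}$ with $r\equiv y\pmod n$. $\left(\frac{\cdot}{n}\right)$ denotes the Jacobi symbol. *)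

theory Defs
  imports "HOL-Number_Theory.Number_Theory"
begin

definition Jacobi :: "int \<Rightarrow> int \<Rightarrow> int" where
  "Jacobi a n = (\<Prod>p\<in>prime_factors n. Legendre a p ^ multiplicity p n)"

definition lres :: "int \<Rightarrow> int \<Rightarrow> int" where
  "lres n y = y mod n"

end

(*
  Gauss's lemma extends to Jacobi symbols: for odd n > 0 and a coprime to n,
  (a/n) = (-1)^g(a), where g(a) counts the k < n/2 whose residue k a mod n exceeds n/2.
  Folding residues into the half system shows that (-1)^g(a) is multiplicative in a, and
  Eisenstein's parity g(a) == sum_k floor(k a / n) + (a - 1) sum_k k (mod 2), together with the
  lattice point count sum_k floor(k m / n) + sum_j floor(j n / m) = (m-1)/2 (n-1)/2, gives a
  reciprocity law for (-1)^g which makes it multiplicative in n as well.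

  For k < n/2 write r and s for the residues of k x and k (1 - x). Then r + s == k (mod n) with
  r, s nonzero, so either r + s = k (then r < k and r, s < n/2) or r + s = k + n (then r > k and
  r or s exceeds n/2); accordingly floor(k x / n) + floor(k (1 - x) / n) is 0 or -1. Adding
  Eisenstein's parities for x, 1 - x and 2 (where the floor sum vanishes) therefore gives
  #{k : r > k} == g(x) + g(1 - x) + g(2), the terms (a - 1) sum_k k cancelling. The four
  identities follow by inclusion-exclusion, using g(-1) = (n - 1)/2.
*)
theory Submission
  imports Defs
begin

lemma Jacobi_eq_prod_mset: "Jacobi a n = (\<Prod>p\<in>#prime_factorization n. Legendre a p)"
  unfolding Jacobi_def image_prod_mset_multiplicity
  by (intro prod.cong refl) (simp add: count_prime_factorization_prime in_prime_factors_imp_prime)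

lemma Jacobi_prime_mult:
  assumes "prime p" "x \<noteq> 0"
  shows "Jacobi a (p * x) = Legendre a p * Jacobi a x"
  using assms by (simp add: Jacobi_eq_prod_mset prime_factorization_mult prime_factorization_prime)

lemma Jacobi_1 [simp]: "Jacobi a 1 = 1"
  by (simp add: Jacobi_def)

section \<open>The half system and the Gauss count\<close>

definition half_range :: "int \<Rightarrow> int set" where
  "half_range n = {1..(n - 1) div 2}"

definition gauss_count :: "int \<Rightarrow> int \<Rightarrow> nat" where
  "gauss_count n a = card {k \<in> half_range n. n < 2 * (k * a mod n)}"

text \<open>For odd \<open>n\<close> and \<open>t\<close> not divisible by \<open>n\<close>, the absolutely least residue of \<open>t\<close> is
  \<open>least_residue_sign n t * abs_least_residue n t\<close>, the second factor lying in \<open>half_range n\<close>.\<close>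

definition least_residue_sign :: "int \<Rightarrow> int \<Rightarrow> int" where
  "least_residue_sign n t = (if n < 2 * (t mod n) then -1 else 1)"

definition abs_least_residue :: "int \<Rightarrow> int \<Rightarrow> int" where
  "abs_least_residue n t = (if n < 2 * (t mod n) then n - t mod n else t mod n)"

lemma mem_half_range_iff: "k \<in> half_range n \<longleftrightarrow> 1 \<le> k \<and> 2 * k < n"
  unfolding half_range_def by auto

lemma finite_half_range [simp]: "finite (half_range n)"
  by (simp add: half_range_def)

lemma card_half_range: "0 < n \<Longrightarrow> int (card (half_range n)) = (n - 1) div 2"
  unfolding half_range_def by simp

lemma mult_mod_ne_0_if_coprime: "coprime a n \<Longrightarrow> t mod n \<noteq> 0 \<Longrightarrow> a * t mod (n::int) \<noteq> 0"
  by (metis coprime_commute coprime_dvd_mult_right_iff dvd_eq_mod_eq_0)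

lemma mod_ne_0_if_mem_half_range:
  assumes "coprime a n" "k \<in> half_range n"
  shows "k * a mod n \<noteq> 0"
proof
  assume "k * a mod n = 0"
  then have "n dvd k"
    using assms(1) by (metis coprime_commute coprime_dvd_mult_left_iff dvd_eq_mod_eq_0)
  then show False
    using assms(2) zdvd_imp_le[of n k] by (auto simp: mem_half_range_iff)
qed

lemma least_residue_sign_cong:
  "[u = v] (mod n) \<Longrightarrow> least_residue_sign n u = least_residue_sign n v"
  by (simp add: least_residue_sign_def cong_def)

lemma least_residue_sign_uminus:
  assumes "0 < n" "odd n" "t mod n \<noteq> 0"
  shows "least_residue_sign n (- t) = - least_residue_sign n t"
proof -
  have "(- t) mod n = n - t mod n"
    using assms(3) by (simp add: zmod_zminus1_eq_if)
  moreover have "2 * (t mod n) \<noteq> n"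
    by (metis assms(2) dvd_triv_left)
  ultimately show ?thesis
    unfolding least_residue_sign_def by auto
qed

lemma least_residue_sign_mult:
  assumes "0 < n" "odd n" "coprime a n" "t mod n \<noteq> 0"
  shows "least_residue_sign n (a * t)
    = least_residue_sign n t * least_residue_sign n (a * abs_least_residue n t)"
proof (cases "n < 2 * (t mod n)")
  case True
  have "[n - t mod n = - t] (mod n)"
    using cong_diff[of n 0 n "t mod n" t] by (simp add: cong_def)
  then have "[a * abs_least_residue n t = - (a * t)] (mod n)"
    using True cong_scalar_left[of "n - t mod n" "- t" n a] by (simp add: abs_least_residue_def)
  then have "least_residue_sign n (a * abs_least_residue n t) = - least_residue_sign n (a * t)"
    using least_residue_sign_uminus[OF assms(1,2) mult_mod_ne_0_if_coprime[OF assms(3,4)]]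
    by (simp add: least_residue_sign_cong)
  with True show ?thesis
    by (simp add: least_residue_sign_def)
next
  case False
  then have "[a * abs_least_residue n t = a * t] (mod n)"
    unfolding abs_least_residue_def cong_def by (simp add: mod_mult_right_eq)
  then have "least_residue_sign n (a * abs_least_residue n t) = least_residue_sign n (a * t)"
    by (rule least_residue_sign_cong)
  with False show ?thesis
    by (simp add: least_residue_sign_def)
qed

lemma abs_least_residue_mem_half_range:
  assumes "0 < n" "odd n" "t mod n \<noteq> 0"
  shows "abs_least_residue n t \<in> half_range n"
proof -
  have "0 \<le> t mod n" "t mod n < n"
    using assms(1) by auto
  moreover have "2 * (t mod n) \<noteq> n"
    by (metis assms(2) dvd_triv_left)
  ultimately show ?thesis
    using assms(3) unfolding abs_least_residue_def mem_half_range_iff by auto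
qed

lemma abs_least_residue_eq_imp_cong:
  assumes "abs_least_residue n u = abs_least_residue n v"
  shows "[u = v] (mod n) \<or> [u = - v] (mod n)"
proof (cases "n < 2 * (u mod n) \<longleftrightarrow> n < 2 * (v mod n)")
  case True
  then have "u mod n = v mod n"
    using assms unfolding abs_least_residue_def by (auto split: if_splits)
  then show ?thesis
    by (simp add: cong_def)
next
  case False
  then have "u mod n + v mod n = n"
    using assms unfolding abs_least_residue_def by (auto split: if_splits)
  then have "[u + v = 0] (mod n)"
    by (metis cong_def mod_add_eq mod_self mod_0)
  then show ?thesis
    by (metis add.commute cong_add_lcancel_0 add_minus_cancel cong_add_rcancel)
qed

lemma inj_on_abs_least_residue:
  assumes "coprime b n"
  shows "inj_on (\<lambda>k. abs_least_residue n (k * b)) (half_range n)"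
proof (rule inj_onI)
  fix k k' assume k: "k \<in> half_range n" and k': "k' \<in> half_range n"
    and eq: "abs_least_residue n (k * b) = abs_least_residue n (k' * b)"
  from abs_least_residue_eq_imp_cong[OF eq]
  have "[k * b = k' * b] (mod n) \<or> [k * b = (- k') * b] (mod n)"
    by simp
  then have "[k = k'] (mod n) \<or> [k = - k'] (mod n)"
    using cong_mult_rcancel[OF assms] by blast
  then have "n dvd k - k' \<or> n dvd k + k'"
    by (simp add: cong_iff_dvd_diff)
  moreover have "\<bar>k - k'\<bar> < n" "0 < k + k'" "k + k' < n"
    using k k' by (auto simp: mem_half_range_iff)
  ultimately show "k = k'"
    using dvd_imp_le_int[of "k - k'" n] zdvd_imp_le[of n "k + k'"] by linarith
qed

lemma bij_betw_abs_least_residue: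
  assumes "0 < n" "odd n" "coprime b n"
  shows "bij_betw (\<lambda>k. abs_least_residue n (k * b)) (half_range n) (half_range n)"
proof -
  have "(\<lambda>k. abs_least_residue n (k * b)) ` half_range n \<subseteq> half_range n"
    using abs_least_residue_mem_half_range[OF assms(1,2)] mod_ne_0_if_mem_half_range[OF assms(3)]
    by blast
  with inj_on_abs_least_residue[OF assms(3)] show ?thesis
    by (simp add: bij_betw_def endo_inj_surj)
qed

lemma prod_least_residue_sign:
  "(\<Prod>k\<in>half_range n. least_residue_sign n (k * a)) = (-1) ^ gauss_count n a"
  unfolding least_residue_sign_def gauss_count_def by (simp add: prod.If_cases Int_def)

lemma gauss_count_cong: "[a = b] (mod n) \<Longrightarrow> gauss_count n a = gauss_count n b"
  unfolding gauss_count_def cong_def by (metis mod_mult_right_eq)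

lemma gauss_count_mult:
  assumes "0 < n" "odd n" "coprime a n" "coprime b n"
  shows "(-1::int) ^ gauss_count n (a * b) = (-1) ^ gauss_count n a * (-1) ^ gauss_count n b"
proof -
  let ?K = "half_range n" and ?s = "least_residue_sign n" and ?r = "abs_least_residue n"
  have "(-1) ^ gauss_count n (a * b) = (\<Prod>k\<in>?K. ?s (a * (k * b)))"
    unfolding prod_least_residue_sign[symmetric] by (simp add: mult.left_commute)
  also have "\<dots> = (\<Prod>k\<in>?K. ?s (k * b) * ?s (a * ?r (k * b)))"
  proof (rule prod.cong[OF refl])
    fix k assume "k \<in> ?K"
    then show "?s (a * (k * b)) = ?s (k * b) * ?s (a * ?r (k * b))"
      by (intro least_residue_sign_mult[OF assms(1-3)] mod_ne_0_if_mem_half_range[OF assms(4)])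
  qed
  also have "\<dots> = (-1) ^ gauss_count n b * (\<Prod>k\<in>?K. ?s (a * ?r (k * b)))"
    by (simp only: prod.distrib prod_least_residue_sign)
  also have "(\<Prod>k\<in>?K. ?s (a * ?r (k * b))) = (-1) ^ gauss_count n a"
    unfolding prod_least_residue_sign[symmetric] mult.commute[of a]
    by (rule prod.reindex_bij_betw[OF bij_betw_abs_least_residue[OF assms(1,2,4)]])
  finally show ?thesis
    by (simp add: mult.commute)
qed

lemma neg_one_power_eq_iff: "((-1::int) ^ i = (-1) ^ j) \<longleftrightarrow> even (i + j)"
  by (simp add: minus_one_power_iff)

lemma even_gauss_count_mult:
  assumes "0 < n" "odd n" "coprime a n" "coprime b n"
  shows "even (gauss_count n (a * b) + gauss_count n a + gauss_count n b)"
  using gauss_count_mult[OF assms] by (simp add: neg_one_power_eq_iff power_add[symmetric] add.assoc)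

section \<open>Eisenstein's parity and reciprocity\<close>

definition floor_sum :: "int \<Rightarrow> int \<Rightarrow> int" where
  "floor_sum n a = (\<Sum>k\<in>half_range n. k * a div n)"

lemma even_mod_minus_abs_least_residue:
  assumes "odd n"
  shows "even (t mod n - abs_least_residue n t - (if n < 2 * (t mod n) then 1 else 0))"
  using assms by (simp add: abs_least_residue_def)

lemma sum_abs_least_residue:
  assumes "0 < n" "odd n" "coprime a n"
  shows "(\<Sum>k\<in>half_range n. abs_least_residue n (k * a)) = \<Sum>(half_range n)"
  using sum.reindex_bij_betw[OF bij_betw_abs_least_residue[OF assms], of id] by simp

text \<open>Sum \<open>k a = n \<lfloor>k a / n\<rfloor> + (k a mod n)\<close> over the half system and reduce modulo 2: the
  residue \<open>k a mod n\<close> differs from its folded value by an odd number exactly when it is large,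
  and the folded values run through the half system again.\<close>

lemma even_gauss_count_floor_sum:
  assumes "0 < n" "odd n" "coprime a n"
  shows "even (int (gauss_count n a) + floor_sum n a + (a - 1) * \<Sum>(half_range n))"
proof -
  let ?K = "half_range n"
  define R where "R = (\<Sum>k\<in>?K. k * a mod n)"
  have "a * \<Sum>?K = (\<Sum>k\<in>?K. n * (k * a div n) + k * a mod n)"
    by (simp add: sum_distrib_left mult.commute del: sum.distrib)
  also have "\<dots> = n * floor_sum n a + R"
    by (simp only: floor_sum_def R_def sum.distrib sum_distrib_left)
  finally have aK: "a * \<Sum>?K = n * floor_sum n a + R" .
  have "(\<Sum>k\<in>?K. if n < 2 * (k * a mod n) then 1 else 0) = int (gauss_count n a)"
    by (simp add: gauss_count_def sum.If_cases Int_def)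
  moreover have "even (\<Sum>k\<in>?K. k * a mod n - abs_least_residue n (k * a)
      - (if n < 2 * (k * a mod n) then 1 else 0))"
    using even_mod_minus_abs_least_residue[OF assms(2)] by (intro dvd_sum) auto
  ultimately have "even (R - \<Sum>?K - int (gauss_count n a))"
    by (simp add: sum_subtractf R_def sum_abs_least_residue[OF assms])
  moreover have "even ((n + 1) * floor_sum n a)"
    using assms(2) by simp
  moreover have "int (gauss_count n a) + floor_sum n a + (a - 1) * \<Sum>?K
      = (n + 1) * floor_sum n a + (R - \<Sum>?K - int (gauss_count n a)) + 2 * int (gauss_count n a)"
    using aK by (simp add: algebra_simps)
  ultimately show ?thesis
    by (metis dvd_add dvd_triv_left)
qed

lemma div_eq_card_mult_le:
  fixes c n M :: int
  assumes "0 < n" "0 \<le> c div n" "c div n \<le> M"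
  shows "c div n = int (card {j \<in> {1..M}. j * n \<le> c})"
proof -
  have "j * n \<le> c \<longleftrightarrow> j \<le> c div n" for j
  proof
    assume "j * n \<le> c"
    then have "j * n div n \<le> c div n"
      using assms(1) by (rule zdiv_mono1)
    then show "j \<le> c div n"
      using assms(1) by simp
  next
    assume "j \<le> c div n"
    then have "j * n \<le> c div n * n"
      using assms(1) by simp
    also have "\<dots> \<le> c"
      using div_mult_mod_eq[of c n] pos_mod_sign[OF assms(1), of c] by linarith
    finally show "j * n \<le> c" .
  qed
  then have "{j \<in> {1..M}. j * n \<le> c} = {1..c div n}"
    using assms(3) by force
  then show ?thesis
    using assms(2) by (simp only: card_atLeastAtMost_int)
qed

lemma floor_sum_eq_card:
  assumes "0 < n" "0 < m"
  shows "floor_sum n m = int (card {(k, j) \<in> half_range n \<times> half_range m. j * n \<le> k * m})"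
proof -
  have "k * m div n = int (card {j \<in> half_range m. j * n \<le> k * m})" if k: "k \<in> half_range n" for k
  proof -
    have "0 \<le> k * m div n"
      using k assms by (simp add: mem_half_range_iff pos_imp_zdiv_nonneg_iff)
    have "k * m div n * n \<le> k * m"
      using div_mult_mod_eq[of "k * m" n] pos_mod_sign[OF assms(1), of "k * m"] by linarith
    moreover have "2 * k * m < n * m"
      using k assms(2) by (simp add: mem_half_range_iff)
    ultimately have "2 * (k * m div n) * n < m * n"
      by (simp add: algebra_simps)
    then have "k * m div n \<le> (m - 1) div 2"
      using assms(1) mult_less_cancel_right_pos[of n "2 * (k * m div n)" m] by linarith
    from div_eq_card_mult_le[OF assms(1) \<open>0 \<le> k * m div n\<close> this] show ?thesis
      by (simp add: half_range_def)
  qed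
  then have "floor_sum n m = (\<Sum>k\<in>half_range n. int (card {j \<in> half_range m. j * n \<le> k * m}))"
    unfolding floor_sum_def by (rule sum.cong[OF refl])
  also have "\<dots> = int (card (SIGMA k:half_range n. {j \<in> half_range m. j * n \<le> k * m}))"
    by (simp add: card_SigmaI)
  also have "(SIGMA k:half_range n. {j \<in> half_range m. j * n \<le> k * m})
      = {(k, j) \<in> half_range n \<times> half_range m. j * n \<le> k * m}"
    by auto
  finally show ?thesis .
qed

text \<open>The diagonal \<open>j n = k m\<close> splits the lattice points of the rectangle
  \<open>half_range n \<times> half_range m\<close> into the two floor sums; coprimality keeps it free of lattice
  points.\<close>

lemma floor_sum_reciprocity:
  assumes "0 < m" "0 < n" "coprime m n"
  shows "floor_sum n m + floor_sum m n = (n - 1) div 2 * ((m - 1) div 2)"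
proof -
  let ?K = "half_range n" and ?J = "half_range m"
  define P where "P = {(k, j) \<in> ?K \<times> ?J. j * n \<le> k * m}"
  define Q where "Q = {(k, j) \<in> ?K \<times> ?J. k * m \<le> j * n}"
  have "floor_sum m n = int (card (prod.swap ` Q))"
    unfolding floor_sum_eq_card[OF assms(1,2)] Q_def
    by (intro arg_cong[where f = "\<lambda>A. int (card A)"]) auto
  then have FQ: "floor_sum m n = int (card Q)"
    by (simp add: card_image)
  have "P \<inter> Q = {}"
  proof (intro equals0I)
    fix kj assume "kj \<in> P \<inter> Q"
    then obtain k j where "k \<in> ?K" and "j * n = k * m"
      unfolding P_def Q_def by force
    then have "n dvd k"
      using assms(3) by (metis coprime_commute coprime_dvd_mult_left_iff dvd_triv_right)
    with \<open>k \<in> ?K\<close> show False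
      using zdvd_imp_le[of n k] by (simp add: mem_half_range_iff)
  qed
  moreover have "P \<union> Q = ?K \<times> ?J"
    unfolding P_def Q_def by auto
  moreover have "finite P" "finite Q"
    unfolding P_def Q_def by (auto intro: finite_subset[of _ "?K \<times> ?J"])
  ultimately have "card P + card Q = card ?K * card ?J"
    by (simp add: card_Un_disjoint[symmetric] card_cartesian_product)
  then have "int (card P) + int (card Q) = int (card ?K) * int (card ?J)"
    by (metis of_nat_add of_nat_mult)
  then show ?thesis
    unfolding floor_sum_eq_card[OF assms(2,1)] FQ card_half_range[OF assms(1)]
      card_half_range[OF assms(2)]
    by (simp add: P_def)
qed

lemma gauss_count_reciprocity:
  assumes "0 < m" "0 < n" "odd m" "odd n" "coprime m n"
  shows "even (int (gauss_count n m) + int (gauss_count m n) + (n - 1) div 2 * ((m - 1) div 2))"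
proof -
  have nm: "even (int (gauss_count n m) + floor_sum n m + (m - 1) * \<Sum>(half_range n))"
    (is "even ?nm")
    using assms by (intro even_gauss_count_floor_sum) simp_all
  have mn: "even (int (gauss_count m n) + floor_sum m n + (n - 1) * \<Sum>(half_range m))"
    (is "even ?mn")
    using assms by (intro even_gauss_count_floor_sum) (simp_all add: coprime_commute)
  have "even ((m - 1) * \<Sum>(half_range n))" "even ((n - 1) * \<Sum>(half_range m))"
    using assms(3,4) by simp_all
  note even_sum = dvd_diff[OF dvd_diff[OF dvd_add[OF nm mn] this(1)] this(2)]
  have "int (gauss_count n m) + int (gauss_count m n) + (n - 1) div 2 * ((m - 1) div 2)
      = ?nm + ?mn - (m - 1) * \<Sum>(half_range n) - (n - 1) * \<Sum>(half_range m)"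
    using floor_sum_reciprocity[OF assms(1,2,5)] by simp
  then show ?thesis
    using even_sum by (simp only:)
qed

section \<open>Gauss's lemma for the Jacobi symbol\<close>

lemma even_half_mult_odd:
  fixes m n :: int
  assumes "odd m" "odd n"
  shows "even ((m * n - 1) div 2 + (m - 1) div 2 + (n - 1) div 2)"
proof -
  obtain p q where "m = 2 * p + 1" "n = 2 * q + 1"
    using assms by (blast elim: oddE)
  then have "(m * n - 1) div 2 + (m - 1) div 2 + (n - 1) div 2 = 2 * (p * q + p + q)"
    by (simp add: algebra_simps)
  then show ?thesis
    by simp
qed

lemma odd_pos_representative:
  fixes a N :: int
  assumes "0 < N" "odd N"
  obtains b where "0 < b" "odd b" "[b = a] (mod N)"
proof
  define b where "b = (if odd (a mod N) then a mod N else a mod N + N)"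
  have "0 \<le> a mod N"
    using assms(1) by simp
  then show "0 < b" "odd b"
    using assms unfolding b_def by (auto simp: le_less)
  show "[b = a] (mod N)"
    by (simp add: b_def cong_def)
qed

text \<open>Multiplicativity in the modulus is reduced to multiplicativity in the argument: replace
  \<open>a\<close> by an odd positive representative \<open>b\<close> and apply reciprocity to the pairs \<open>(b, m n)\<close>,
  \<open>(b, m)\<close>, \<open>(b, n)\<close>.\<close>

lemma gauss_count_mult_modulus:
  assumes "0 < m" "0 < n" "odd m" "odd n" "coprime a (m * n)"
  shows "(-1::int) ^ gauss_count (m * n) a = (-1) ^ gauss_count m a * (-1) ^ gauss_count n a"
proof -
  define N where "N = m * n"
  have N: "0 < N" "odd N"
    using assms by (simp_all add: N_def)
  obtain b where b: "0 < b" "odd b" and "[b = a] (mod N)"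
    using odd_pos_representative[OF N] .
  then have cong: "[b = a] (mod N)" "[b = a] (mod m)" "[b = a] (mod n)"
    unfolding N_def by (auto intro: cong_modulus_mult cong_modulus_mult[of _ _ n m] simp: mult.commute)
  have "coprime b N"
    using assms(5) cong(1) unfolding N_def by (metis cong_imp_coprime cong_sym)
  then have cop: "coprime N b" "coprime m b" "coprime n b"
    by (simp_all add: N_def coprime_commute)
  have "even (int (gauss_count N b) + int (gauss_count b N) + (N - 1) div 2 * ((b - 1) div 2))"
    using b N cop(1) by (intro gauss_count_reciprocity) (simp_all add: coprime_commute)
  moreover have "even (int (gauss_count m b) + int (gauss_count b m) + (m - 1) div 2 * ((b - 1) div 2))"
    using b assms cop(2) by (intro gauss_count_reciprocity) (simp_all add: coprime_commute)
  moreover have "even (int (gauss_count n b) + int (gauss_count b n) + (n - 1) div 2 * ((b - 1) div 2))"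
    using b assms cop(3) by (intro gauss_count_reciprocity) (simp_all add: coprime_commute)
  moreover have "even (gauss_count b N + gauss_count b m + gauss_count b n)"
    unfolding N_def using even_gauss_count_mult[OF b cop(2,3)] .
  moreover have "even ((N - 1) div 2 * ((b - 1) div 2) + (m - 1) div 2 * ((b - 1) div 2)
      + (n - 1) div 2 * ((b - 1) div 2))"
    using even_half_mult_odd[OF assms(3,4)] unfolding N_def distrib_right[symmetric] by simp
  ultimately have "even (gauss_count N b + gauss_count m b + gauss_count n b)"
    by (simp; argo)
  then show ?thesis
    using gauss_count_cong[OF cong(1)] gauss_count_cong[OF cong(2)] gauss_count_cong[OF cong(3)]
    by (simp add: neg_one_power_eq_iff N_def power_add[symmetric]; argo)
qed

context GAUSS
begin

lemma card_E_eq_gauss_count: "card E = gauss_count (int p) a"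
proof -
  have A: "A = half_range (int p)"
    unfolding A_def half_range_def by auto
  obtain z where z: "int p = 2 * z + 1"
    using p_odd_int by blast
  have large: "(int p - 1) div 2 < r \<longleftrightarrow> int p < 2 * r" for r
    unfolding z by presburger
  have inj: "inj_on (\<lambda>k. k * a mod int p) A"
    using comp_inj_on[OF inj_on_xa_A SR_B_inj[unfolded B_def]] by (simp add: o_def)
  have "C = (\<lambda>k. k * a mod int p) ` A"
    unfolding C_def B_def image_image ..
  then have "E = (\<lambda>k. k * a mod int p) ` {k \<in> A. (int p - 1) div 2 < k * a mod int p}"
    unfolding E_def by force
  also have "{k \<in> A. (int p - 1) div 2 < k * a mod int p} = {k \<in> A. int p < 2 * (k * a mod int p)}"
    unfolding large ..
  finally show ?thesis
    unfolding gauss_count_def A[symmetric] using inj_on_subset[OF inj] by (simp add: card_image)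
qed

end

lemma gauss_count_prime:
  assumes "prime p" "2 < p" "\<not> p dvd a"
  shows "(-1::int) ^ gauss_count p a = Legendre a p"
proof -
  have "0 < p"
    using assms(2) by simp
  interpret GAUSS "nat p" "a mod p"
  proof
    show "prime (nat p)" "2 < nat p"
      using assms(1,2) by (simp_all add: prime_nat_iff_prime)
    have "a mod p \<noteq> 0"
      using assms(3) by (simp add: dvd_eq_mod_eq_0)
    then show "[a mod p \<noteq> 0] (mod int (nat p))"
      using \<open>0 < p\<close> by (simp add: cong_def)
    show "0 < a mod p"
      using \<open>a mod p \<noteq> 0\<close> pos_mod_sign[OF \<open>0 < p\<close>, of a] by linarith
  qed
  have "gauss_count p a = card E"
    using \<open>0 < p\<close> gauss_count_cong[of a "a mod p" p] by (simp add: card_E_eq_gauss_count cong_def)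
  then have "(-1::int) ^ gauss_count p a = Legendre (a mod p) p"
    using gauss_lemma \<open>0 < p\<close> by simp
  also have "\<dots> = Legendre a p"
    by (simp add: Legendre_def QuadRes_def cong_def)
  finally show ?thesis .
qed

theorem Jacobi_gauss_lemma:
  assumes "0 < n" "odd n" "coprime a n"
  shows "(-1::int) ^ gauss_count n a = Jacobi a n"
  using assms
proof (induction n rule: prime_divisors_induct)
  case zero
  then show ?case by simp
next
  case (unit n)
  then have "n = 1"
    by (simp add: zdvd1_eq)
  then show ?case
    by (simp add: gauss_count_def half_range_def)
next
  case (factor p n)
  have "0 < p" "2 \<le> p"
    using factor.hyps prime_ge_2_int by (auto simp: prime_gt_0_int)
  then have n: "0 < n" "odd n" "odd p" "2 < p"
    using factor.prems(1,2) by (auto simp: zero_less_mult_iff le_less)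
  have "coprime a p" "coprime a n"
    using factor.prems(3) by simp_all
  then have "\<not> p dvd a"
    using factor.hyps(1) by (metis coprime_absorb_right not_prime_unit)
  have "(-1::int) ^ gauss_count (p * n) a = (-1) ^ gauss_count p a * (-1) ^ gauss_count n a"
    using gauss_count_mult_modulus \<open>0 < p\<close> n factor.prems(3) by blast
  also have "\<dots> = Legendre a p * Jacobi a n"
    using gauss_count_prime[OF factor.hyps(1) n(4) \<open>\<not> p dvd a\<close>] factor.IH n \<open>coprime a n\<close>
    by simp
  also have "\<dots> = Jacobi a (p * n)"
    using Jacobi_prime_mult[OF factor.hyps(1)] n(1) by simp
  finally show ?case .
qed

section \<open>Residues of \<open>k x\<close> and \<open>k (1 - x)\<close>\<close>

lemma mod_sum_cases:
  fixes n k u v :: int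
  assumes "0 < n" "0 < k" "2 * k < n" "u + v = k" "u mod n \<noteq> 0" "v mod n \<noteq> 0"
  shows "u div n + v div n = (if k < u mod n then -1 else 0)"
    and "k < u mod n \<longleftrightarrow> n < 2 * (u mod n) \<or> n < 2 * (v mod n)"
proof -
  define q where "q = u div n + v div n"
  have r: "0 < u mod n" "u mod n < n" and s: "0 < v mod n" "v mod n < n"
    using assms(5,6) pos_mod_sign[OF assms(1), of u] pos_mod_sign[OF assms(1), of v]
      pos_mod_bound[OF assms(1), of u] pos_mod_bound[OF assms(1), of v] by linarith+
  have q: "n * q = k - u mod n - v mod n"
    using assms(4) div_mult_mod_eq[of u n] div_mult_mod_eq[of v n] by (simp add: q_def algebra_simps)
  then have "n * (-2) < n * q" "n * q < n * 1"
    using r s assms(2,3) by linarith+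
  then have "-2 < q" "q < 1"
    using mult_less_cancel_left_pos[OF assms(1)] by blast+
  then consider "q = -1" | "q = 0"
    by linarith
  then have "u div n + v div n = (if k < u mod n then -1 else 0)
      \<and> (k < u mod n \<longleftrightarrow> n < 2 * (u mod n) \<or> n < 2 * (v mod n))"
  proof cases
    case 1
    then have "u mod n + v mod n = k + n"
      using q by simp
    then have "k < u mod n" "n < 2 * (u mod n) \<or> n < 2 * (v mod n)"
      using s assms(2) by arith+
    with 1 show ?thesis
      by (simp add: q_def)
  next
    case 2
    then have "u mod n + v mod n = k"
      using q by simp
    then have "\<not> k < u mod n" "\<not> n < 2 * (u mod n)" "\<not> n < 2 * (v mod n)"
      using r s assms(3) by linarith+
    with 2 show ?thesis
      by (simp add: q_def)
  qed
  then show "u div n + v div n = (if k < u mod n then -1 else 0)"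
    and "k < u mod n \<longleftrightarrow> n < 2 * (u mod n) \<or> n < 2 * (v mod n)"
    by blast+
qed

lemma mod_mult_sum_cases:
  assumes "0 < n" "coprime x n" "coprime (1 - x) n" "k \<in> half_range n"
  shows "k * x div n + k * (1 - x) div n = (if k < k * x mod n then -1 else 0)"
    and "k < k * x mod n \<longleftrightarrow> n < 2 * (k * x mod n) \<or> n < 2 * (k * (1 - x) mod n)"
  using mod_sum_cases[OF assms(1), of k "k * x" "k * (1 - x)"] assms(4)
    mod_ne_0_if_mem_half_range[OF assms(2,4)] mod_ne_0_if_mem_half_range[OF assms(3,4)]
  by (simp_all add: mem_half_range_iff algebra_simps)

lemma floor_sum_2 [simp]: "floor_sum n 2 = 0"
  unfolding floor_sum_def by (rule sum.neutral) (simp add: mem_half_range_iff div_pos_pos_trivial)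

lemma gauss_count_minus_1: "gauss_count n (-1) = card (half_range n)"
proof -
  have "n < 2 * (k * -1 mod n)" if "k \<in> half_range n" for k
  proof -
    have "k * -1 mod n = n - k"
      using that by (simp add: mem_half_range_iff zmod_zminus1_eq_if mod_pos_pos_trivial)
    then show ?thesis
      using that by (simp add: mem_half_range_iff)
  qed
  then show ?thesis
    unfolding gauss_count_def by (metis (no_types, lifting) Collect_cong Collect_mem_eq)
qed

lemma large_residue_union_parity:
  assumes "0 < n" "odd n" "coprime x n" "coprime (1 - x) n"
  shows "even (card {k \<in> half_range n. n < 2 * (k * x mod n) \<or> n < 2 * (k * (1 - x) mod n)}
    + gauss_count n x + gauss_count n (1 - x) + gauss_count n 2)"
proof -
  let ?K = "half_range n"
  define U where "U = {k \<in> ?K. n < 2 * (k * x mod n) \<or> n < 2 * (k * (1 - x) mod n)}"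
  note split = mod_mult_sum_cases[OF assms(1,3,4)]
  have "floor_sum n x + floor_sum n (1 - x) = (\<Sum>k\<in>?K. if k < k * x mod n then -1 else 0)"
    unfolding floor_sum_def sum.distrib[symmetric] using split(1) by (rule sum.cong[OF refl])
  also have "\<dots> = - int (card U)"
    unfolding U_def using split(2) by (simp add: sum.If_cases Int_def)
  finally have F: "floor_sum n x + floor_sum n (1 - x) = - int (card U)" .
  have ex: "even (int (gauss_count n x) + floor_sum n x + (x - 1) * \<Sum>?K)" (is "even ?ex")
    using assms(1-3) by (rule even_gauss_count_floor_sum)
  have ey: "even (int (gauss_count n (1 - x)) + floor_sum n (1 - x) + (1 - x - 1) * \<Sum>?K)"
    (is "even ?ey")
    using assms(1,2,4) by (rule even_gauss_count_floor_sum)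
  have e2: "even (int (gauss_count n 2) + floor_sum n 2 + (2 - 1) * \<Sum>?K)" (is "even ?e2")
    using assms(1,2) by (intro even_gauss_count_floor_sum) simp_all
  have "int (card U + gauss_count n x + gauss_count n (1 - x) + gauss_count n 2)
      = ?ex + ?ey + ?e2 + 2 * int (card U)"
    using F by (simp add: algebra_simps)
  then have "even (int (card U + gauss_count n x + gauss_count n (1 - x) + gauss_count n 2))"
    using dvd_add[OF dvd_add[OF dvd_add[OF ex ey] e2] dvd_triv_left] by (simp only:)
  then show ?thesis
    unfolding U_def even_of_nat_iff .
qed

lemma large_residue_sets:
  assumes "0 < n" "odd n" "coprime x n" "coprime (1 - x) n"
  defines "A \<equiv> {k \<in> half_range n. n < 2 * (k * x mod n)}"
    and "B \<equiv> {k \<in> half_range n. n < 2 * (k * (1 - x) mod n)}"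
  shows "{k. 1 \<le> k \<and> 2 * k < n \<and> lres n (k * x) > k} = A \<union> B"
    and "{k. 1 \<le> k \<and> 2 * k < n \<and> 2 * lres n (k * x) > n \<and> 2 * lres n (k * (1 - x)) > n}
      = A \<inter> B"
    and "{k. 1 \<le> k \<and> 2 * k < n \<and> 2 * lres n (k * x) < n \<and> 2 * lres n (k * (1 - x)) < n}
      = half_range n - (A \<union> B)"
    and "{k. 1 \<le> k \<and> 2 * k < n \<and> 2 * lres n (k * x) > n \<and> n > 2 * lres n (k * (1 - x))}
      = A - B"
proof -
  have odd2: "2 * y \<noteq> n" for y
    using assms(2) by auto
  have K: "{k. 1 \<le> k \<and> 2 * k < n \<and> P k} = {k \<in> half_range n. P k}" for P
    by (simp add: mem_half_range_iff)
  show "{k. 1 \<le> k \<and> 2 * k < n \<and> lres n (k * x) > k} = A \<union> B"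
    unfolding K lres_def A_def B_def using mod_mult_sum_cases(2)[OF assms(1,3,4)] by blast
  show "{k. 1 \<le> k \<and> 2 * k < n \<and> 2 * lres n (k * x) > n \<and> 2 * lres n (k * (1 - x)) > n}
      = A \<inter> B"
    unfolding K lres_def A_def B_def by blast
  show "{k. 1 \<le> k \<and> 2 * k < n \<and> 2 * lres n (k * x) < n \<and> 2 * lres n (k * (1 - x)) < n}
      = half_range n - (A \<union> B)"
    unfolding K lres_def A_def B_def using odd2 by (auto simp: neq_iff)
  show "{k. 1 \<le> k \<and> 2 * k < n \<and> 2 * lres n (k * x) > n \<and> n > 2 * lres n (k * (1 - x))}
      = A - B"
    unfolding K lres_def A_def B_def using odd2 by (auto simp: neq_iff)
qed

lemma large_residue_set_parities:
  assumes "0 < n" "odd n" "coprime x n" "coprime (1 - x) n"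
  defines "A \<equiv> {k \<in> half_range n. n < 2 * (k * x mod n)}"
    and "B \<equiv> {k \<in> half_range n. n < 2 * (k * (1 - x) mod n)}"
  shows "even (card (A \<union> B) + gauss_count n (2 * x * (1 - x)))"
    and "even (card (A \<inter> B) + gauss_count n 2)"
    and "even (card (half_range n - (A \<union> B)) + gauss_count n (2 * x * (x - 1)))"
    and "even (card (A - B) + gauss_count n (2 * x))"
proof -
  let ?K = "half_range n" and ?g = "gauss_count n"
  have cop: "coprime 2 n" "coprime (2 * x) n" "coprime (2 * x * (1 - x)) n"
    using assms(2-4) by simp_all
  have neg: "2 * x * (x - 1) = -1 * (2 * x * (1 - x))"
    by (simp add: algebra_simps)
  have "A \<union> B = {k \<in> ?K. n < 2 * (k * x mod n) \<or> n < 2 * (k * (1 - x) mod n)}"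
    unfolding A_def B_def by blast
  then have "even (card (A \<union> B) + ?g x + ?g (1 - x) + ?g 2)"
    using large_residue_union_parity[OF assms(1-4)] by simp
  moreover have "even (?g (2 * x) + ?g 2 + ?g x)"
    using even_gauss_count_mult[OF assms(1,2) cop(1) assms(3)] .
  moreover have "even (?g (2 * x * (1 - x)) + ?g (2 * x) + ?g (1 - x))"
    using even_gauss_count_mult[OF assms(1,2) cop(2) assms(4)] .
  moreover have "even (?g (2 * x * (x - 1)) + ?g (-1) + ?g (2 * x * (1 - x)))"
    unfolding neg by (rule even_gauss_count_mult[OF assms(1,2) _ cop(3)]) simp
  moreover have "card (A \<union> B) + card (A \<inter> B) = ?g x + ?g (1 - x)"
    "card (?K - (A \<union> B)) + card (A \<union> B) = ?g (-1)"
    "card (A - B) + card (A \<inter> B) = ?g x"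
  proof -
    have fin: "finite A" "finite B" and sub: "A \<union> B \<subseteq> ?K"
      by (auto simp: A_def B_def)
    have "card A = ?g x" "card B = ?g (1 - x)"
      by (simp_all add: A_def B_def gauss_count_def)
    then show "card (A \<union> B) + card (A \<inter> B) = ?g x + ?g (1 - x)"
      "card (?K - (A \<union> B)) + card (A \<union> B) = ?g (-1)"
      "card (A - B) + card (A \<inter> B) = ?g x"
      using card_Un_Int[OF fin] card_Int_Diff[of ?K "A \<union> B"] card_Int_Diff[OF fin(1), of B]
      by (simp_all add: gauss_count_minus_1 Int_absorb1[OF sub])
  qed
  ultimately show "even (card (A \<union> B) + ?g (2 * x * (1 - x)))" "even (card (A \<inter> B) + ?g 2)"
    "even (card (?K - (A \<union> B)) + ?g (2 * x * (x - 1)))" "even (card (A - B) + ?g (2 * x))"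
    by presburger+
qed

theorem theorem1p1:
  fixes n x :: int
  assumes "n > 0" and "odd n" and "gcd (x * (1 - x)) n = 1"
  shows "((-1::int) ^ card {k::int. 1 \<le> k \<and> 2 * k < n \<and> lres n (k * x) > k}
           = Jacobi (2 * x * (1 - x)) n) \<and>
         ((-1::int) ^ card {k::int. 1 \<le> k \<and> 2 * k < n \<and>
             2 * lres n (k * x) > n \<and> 2 * lres n (k * (1 - x)) > n}
           = Jacobi 2 n) \<and>
         ((-1::int) ^ card {k::int. 1 \<le> k \<and> 2 * k < n \<and>
             2 * lres n (k * x) < n \<and> 2 * lres n (k * (1 - x)) < n}
           = Jacobi (2 * x * (x - 1)) n) \<and>
         ((-1::int) ^ card {k::int. 1 \<le> k \<and> 2 * k < n \<and>
             2 * lres n (k * x) > n \<and> n > 2 * lres n (k * (1 - x))}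
           = Jacobi (2 * x) n)"
proof -
  have "coprime (x * (1 - x)) n"
    using assms(3) by (simp add: coprime_iff_gcd_eq_1)
  then have cop: "coprime x n" "coprime (1 - x) n" "coprime (x - 1) n"
    using coprime_minus_left_iff[of "1 - x" n] by simp_all
  have Jacobi: "Jacobi c n = (-1) ^ gauss_count n c" if "coprime c n" for c
    using Jacobi_gauss_lemma[OF assms(1,2) that] ..
  show ?thesis
    unfolding large_residue_sets[OF assms(1,2) cop(1,2)]
    using large_residue_set_parities[OF assms(1,2) cop(1,2)] assms(2) cop
    by (simp add: Jacobi neg_one_power_eq_iff)
qed

end
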